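(* Let $\pi=(x_1,\dots,x_n)$ be a circular ordering of $X$ and let $\delta=\sum_{S}\lambda_S\delta_S$, the sum over all splits $S$ of $X$ that are circular with respect to $\pi$, with $\lambda_S\ge0$ for all such $S$ and $\lambda_S>0$ for every such split both of whose blocks have at least two elements (a generic circular decomposable metric). Then for every circular ordering $\sigma=(y_1,\dots,y_n)$ of $X$ different from $\pi$ (up to rotation and reversal), \[ \frac12\sum_{k=1}^n\delta(y_k,y_{k+1}) \;>\; \frac12\sum_{k=1}^n\delta(x_k,x_{k+1}). \]
   Context: $X=\{1,\dots,n\}$. A circular ordering is a listing $(x_1,\dots,x_n)$ of $X$ regarded cyclically ($x_{n+1}=x_1$); two listings are identified if they differ by rotation or reversal. A split $S=\{A,B\}$ is a partition of $X$ into two nonempty blocks; its split pseudometric is $\delta_S(x,y)=0$ if $x,y$ lie in the same block and $1$ otherwise. A split is circular with respect to $\pi$ if both of its blocks are contiguous arcs of $\pi$, i.e. it has the form $\{\{x_{i+1},\dots,x_j\},\{x_{j+1},\dots,x_i\}\}$ with indices read cyclically. The quantity $\frac12\sum_k\delta(y_k,y_{k+1})$ is the balanced length of $\delta$ with respect to the circular ordering $\sigma$ (half the length of the traveling salesman tour $\sigma$). *)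

theory Defs
  imports Complex_Main
begin

text \<open>Ground set X = {1..n}. A circular ordering is a list listing X without repetition,
  read cyclically: the successor of position k is position (k+1) mod n.\<close>

definition circ_ordering :: "nat \<Rightarrow> nat list \<Rightarrow> bool" where
  "circ_ordering n xs \<longleftrightarrow> distinct xs \<and> set xs = {1..n}"

definition same_circ :: "nat list \<Rightarrow> nat list \<Rightarrow> bool" where
  "same_circ ys xs \<longleftrightarrow> (\<exists>r. ys = rotate r xs \<or> ys = rotate r (rev xs))"

definition is_split :: "nat \<Rightarrow> nat set set \<Rightarrow> bool" where
  "is_split n S \<longleftrightarrow> (\<exists>A. A \<noteq> {} \<and> A \<subset> {1..n} \<and> S = {A, {1..n} - A})"

definition split_pm :: "nat set set \<Rightarrow> nat \<Rightarrow> nat \<Rightarrow> real" where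
  "split_pm S x y = (if \<exists>B\<in>S. x \<in> B \<and> y \<in> B then 0 else 1)"

definition arc :: "nat list \<Rightarrow> nat \<Rightarrow> nat \<Rightarrow> nat set" where
  "arc xs i m = {xs ! ((i + k) mod length xs) | k. k < m}"

definition circ_splits :: "nat \<Rightarrow> nat list \<Rightarrow> nat set set set" where
  "circ_splits n xs = {S. is_split n S \<and>
     (\<exists>i j m l. S = {arc xs i m, arc xs j l})}"

definition circ_comb :: "nat \<Rightarrow> nat list \<Rightarrow> (nat set set \<Rightarrow> real) \<Rightarrow> nat \<Rightarrow> nat \<Rightarrow> real" where
  "circ_comb n xs lam x y = (\<Sum>S\<in>circ_splits n xs. lam S * split_pm S x y)"

definition balanced_length :: "(nat \<Rightarrow> nat \<Rightarrow> real) \<Rightarrow> nat list \<Rightarrow> real" where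
  "balanced_length d ys = (1/2) * (\<Sum>k<length ys. d (ys ! k) (ys ! ((k + 1) mod length ys)))"

end

theory Submission
  imports Defs "HOL-Number_Theory.Cong"
begin

text \<open>The balanced length of \<open>\<Sum>\<^sub>S \<lambda>\<^sub>S \<delta>\<^sub>S\<close> along a tour is half the
  \<open>\<lambda>\<close>-weighted number of times the tour crosses the splits. Every tour crosses every split at
  least twice, while \<open>xs\<close> crosses each split circular for \<open>xs\<close> at most twice. If \<open>ys\<close> is a
  different circular ordering, two neighbours \<open>a, b\<close> in \<open>xs\<close> are not neighbours in \<open>ys\<close> (so
  \<open>n \<ge> 4\<close>), and \<open>ys\<close> crosses the circular split \<open>{{a, b}, X - {a, b}}\<close>, whose weight is
  positive, at least three times: when leaving \<open>a\<close>, when leaving \<open>b\<close> and when entering \<open>a\<close>.\<close>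

lemma add_mod_cancel_left:
  fixes r a b L :: nat
  assumes "a < L" "b < L" "(r + a) mod L = (r + b) mod L"
  shows "a = b"
  using assms by (metis cong_def cong_add_lcancel_nat cong_less_modulus_unique_nat)

lemma add_one_mod_less: "k < L \<Longrightarrow> (k + 1) mod L < (L::nat)"
  by (cases L) auto

lemma rotate_inverse: "rotate (length xs - n mod length xs) (rotate n xs) = xs"
proof (cases "xs = []")
  case False
  have "(length xs - n mod length xs + n) mod length xs
      = (length xs - n mod length xs + n mod length xs) mod length xs"
    by (simp add: mod_add_right_eq)
  also have "\<dots> = 0"
    using False by simp
  finally have "(length xs - n mod length xs + n) mod length xs = 0" .
  then show ?thesis by (simp add: rotate_rotate)
qed simp

lemma same_circ_sym:
  assumes "same_circ ys xs"
  shows "same_circ xs ys"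
proof -
  obtain r where "ys = rotate r xs \<or> ys = rotate r (rev xs)"
    using assms unfolding same_circ_def by blast
  then show ?thesis
  proof
    assume "ys = rotate r xs"
    then show ?thesis
      unfolding same_circ_def by (metis rotate_inverse)
  next
    assume "ys = rotate r (rev xs)"
    then have "rev ys = rotate (length xs - r mod length xs) xs"
      by (simp add: rotate_rev)
    then have "xs = rotate (length ys - (length xs - r mod length xs) mod length ys) (rev ys)"
      by (metis rotate_inverse length_rev length_rotate)
    then show ?thesis unfolding same_circ_def by blast
  qed
qed

section \<open>Cyclic successors\<close>

definition cyclic_succ :: "'a list \<Rightarrow> 'a \<Rightarrow> 'a \<Rightarrow> bool" where
  "cyclic_succ ys a b \<longleftrightarrow> (\<exists>k<length ys. ys!k = a \<and> ys!((k+1) mod length ys) = b)"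

abbreviation cyclic_adjacent :: "'a list \<Rightarrow> 'a \<Rightarrow> 'a \<Rightarrow> bool" where
  "cyclic_adjacent ys a b \<equiv> cyclic_succ ys a b \<or> cyclic_succ ys b a"

lemma cyclic_succI: "k < length ys \<Longrightarrow> cyclic_succ ys (ys!k) (ys!((k+1) mod length ys))"
  unfolding cyclic_succ_def by blast

lemma cyclic_succ_unique:
  "distinct ys \<Longrightarrow> cyclic_succ ys a b \<Longrightarrow> cyclic_succ ys a b' \<Longrightarrow> b = b'"
  unfolding cyclic_succ_def by (metis nth_eq_iff_index_eq)

lemma cyclic_succ_inj:
  assumes "distinct ys" "cyclic_succ ys a b" "cyclic_succ ys a' b"
  shows "a = a'"
proof -
  obtain k k' where k: "k < length ys" "ys!k = a" "ys!((k+1) mod length ys) = b"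
    and k': "k' < length ys" "ys!k' = a'" "ys!((k'+1) mod length ys) = b"
    using assms(2,3) unfolding cyclic_succ_def by blast
  moreover note add_one_mod_less[OF k(1)] add_one_mod_less[OF k'(1)]
  ultimately have "(1 + k) mod length ys = (1 + k') mod length ys"
    using assms(1) by (metis nth_eq_iff_index_eq add.commute)
  then have "k = k'" using add_mod_cancel_left k(1) k'(1) by blast
  then show ?thesis using k k' by simp
qed

lemma cyclic_succ_revI:
  assumes "cyclic_succ ys b a"
  shows "cyclic_succ (rev ys) a b"
proof -
  define L where "L = length ys"
  obtain k where k: "k < L" "ys!k = b" "ys!((k+1) mod L) = a"
    using assms unfolding cyclic_succ_def L_def by blast
  have "\<exists>j<L. rev ys ! j = a \<and> rev ys ! ((j+1) mod L) = b"
  proof (cases "k + 1 < L")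
    case True
    then show ?thesis
      using k by (intro exI[of _ "L - 2 - k"]) (auto simp: L_def rev_nth Suc_diff_Suc numeral_2_eq_2)
  next
    case False
    then have "k + 1 = L"
      using k(1) by simp
    then have "k = L - 1" "(k+1) mod L = 0" "0 < L"
      by simp_all
    then show ?thesis
      using k by (intro exI[of _ "L - 1"]) (auto simp: L_def rev_nth)
  qed
  then show ?thesis unfolding cyclic_succ_def L_def by simp
qed

lemma cyclic_succ_rev [simp]: "cyclic_succ (rev ys) a b \<longleftrightarrow> cyclic_succ ys b a"
  using cyclic_succ_revI[of ys b a] cyclic_succ_revI[of "rev ys" a b] by auto

lemma cyclic_succ_along_adjacent_path:
  assumes "distinct xs" "distinct ys"
    and adj: "\<And>i. i + 1 < length xs \<Longrightarrow> cyclic_adjacent ys (xs!i) (xs!(i+1))"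
    and first: "cyclic_succ ys (xs!0) (xs!1)"
    and "i + 1 < length xs"
  shows "cyclic_succ ys (xs!i) (xs!(i+1))"
  using assms(5)
proof (induction i)
  case 0
  then show ?case using first by simp
next
  case (Suc i)
  then have fwd: "cyclic_succ ys (xs!i) (xs!(i+1))" by simp
  show ?case
  proof (rule ccontr)
    assume "\<not> ?case"
    then have "cyclic_succ ys (xs!(i+2)) (xs!(i+1))"
      using adj[OF Suc.prems] by simp
    then have "xs!(i+2) = xs!i"
      using cyclic_succ_inj[OF assms(2) fwd] by simp
    then show False
      using assms(1) Suc.prems by (simp add: nth_eq_iff_index_eq)
  qed
qed

lemma rotate_if_cyclic_succ_path:
  assumes "distinct ys" "set xs = set ys" "length xs = length ys"
    and succ: "\<And>i. i + 1 < length xs \<Longrightarrow> cyclic_succ ys (xs!i) (xs!(i+1))"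
  shows "\<exists>c. xs = rotate c ys"
proof (cases "xs = []")
  case True
  then show ?thesis using assms(3) by simp
next
  case False
  define L where "L = length ys"
  have "xs!0 \<in> set ys" using False assms(2) by (metis nth_mem length_greater_0_conv)
  then obtain c where c: "c < L" "ys!c = xs!0" unfolding L_def by (metis in_set_conv_nth)
  have xs_nth: "xs!i = ys!((c+i) mod L)" if "i < L" for i
    using that
  proof (induction i)
    case 0
    then show ?case using c by simp
  next
    case (Suc i)
    then have "i + 1 < length xs"
      using assms(3) L_def by simp
    then have "cyclic_succ ys (xs!i) (xs!(i+1))"
      by (rule succ)
    moreover have "xs!i = ys!((c+i) mod L)" "(c+i) mod L < L"
      using Suc by simp_all
    ultimately have "xs!(i+1) = ys!(((c+i) mod L + 1) mod L)"
      using cyclic_succ_unique[OF assms(1)] cyclic_succI[of "(c+i) mod L" ys] L_def by metis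
    then show ?case by (simp add: mod_Suc_eq)
  qed
  have "xs = rotate c ys"
    by (rule nth_equalityI) (auto simp: assms(3) nth_rotate xs_nth L_def)
  then show ?thesis by blast
qed

lemma same_circ_if_consecutive_adjacent:
  assumes "distinct xs" "distinct ys" "set xs = set ys"
    and adj: "\<And>i. i + 1 < length xs \<Longrightarrow> cyclic_adjacent ys (xs!i) (xs!(i+1))"
  shows "same_circ ys xs"
proof -
  have len: "length xs = length ys"
    using assms(1-3) distinct_card by metis
  have adj_rev: "cyclic_adjacent (rev ys) (xs!i) (xs!(i+1))" if "i + 1 < length xs" for i
    using adj[OF that] by auto
  have "\<exists>c. xs = rotate c ys \<or> xs = rotate c (rev ys)"
  proof (cases "length xs \<le> 1 \<or> cyclic_succ ys (xs!0) (xs!1)")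
    case True
    have "cyclic_succ ys (xs!i) (xs!(i+1))" if "i + 1 < length xs" for i
      using True that cyclic_succ_along_adjacent_path[OF assms(1,2) adj _ that] by auto
    then show ?thesis
      using rotate_if_cyclic_succ_path[OF assms(2,3) len] by blast
  next
    case False
    then have "cyclic_succ (rev ys) (xs!0) (xs!1)"
      using adj[of 0] by auto
    then have "cyclic_succ (rev ys) (xs!i) (xs!(i+1))" if "i + 1 < length xs" for i
      using cyclic_succ_along_adjacent_path[OF assms(1) _ adj_rev _ that] assms(2) by simp
    then show ?thesis
      using rotate_if_cyclic_succ_path[of "rev ys" xs] assms(2,3) len by auto
  qed
  then show ?thesis
    using same_circ_sym unfolding same_circ_def by blast
qed

lemma cyclic_adjacent_if_length_le_3:
  assumes "distinct ys" "a \<in> set ys" "b \<in> set ys" "a \<noteq> b" "length ys \<le> 3"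
  shows "cyclic_adjacent ys a b"
proof -
  define L where "L = length ys"
  obtain p q where p: "p < L" "ys!p = a" and q: "q < L" "ys!q = b"
    using assms(2,3) unfolding L_def by (metis in_set_conv_nth)
  have "p \<noteq> q" using p q assms(4) by blast
  then consider "q = p + 1" | "p = q + 1" | "L = 3" "p = 2" "q = 0" | "L = 3" "p = 0" "q = 2"
    using p(1) q(1) assms(5) unfolding L_def by linarith
  then have "q = (p+1) mod L \<or> p = (q+1) mod L"
    using p(1) q(1) by cases simp_all
  then show ?thesis
    using cyclic_succI[of p ys] cyclic_succI[of q ys] p q L_def by auto
qed

section \<open>Crossing numbers of splits\<close>

definition crossings :: "nat set set \<Rightarrow> nat list \<Rightarrow> nat set" where
  "crossings S zs = {k. k < length zs \<and> split_pm S (zs!k) (zs!((k+1) mod length zs)) = 1}"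

lemma sum_split_pm_eq_card_crossings:
  "(\<Sum>k<length zs. split_pm S (zs!k) (zs!((k+1) mod length zs))) = card (crossings S zs)"
proof -
  have "split_pm S x y = of_bool (split_pm S x y = 1)" for x y
    unfolding split_pm_def by simp
  then have "(\<Sum>k<length zs. split_pm S (zs!k) (zs!((k+1) mod length zs)))
      = (\<Sum>k<length zs. of_bool (split_pm S (zs!k) (zs!((k+1) mod length zs)) = 1))"
    by presburger
  also have "\<dots> = card (crossings S zs)"
    by (simp add: crossings_def lessThan_def Collect_conj_eq)
  finally show ?thesis .
qed

lemma finite_circ_splits: "finite (circ_splits n xs)"
proof (rule finite_subset)
  show "circ_splits n xs \<subseteq> Pow (Pow {1..n})"
    unfolding circ_splits_def is_split_def by auto
qed simp

lemma balanced_length_circ_comb: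
  "balanced_length (circ_comb n xs lam) zs
     = (\<Sum>S\<in>circ_splits n xs. lam S * card (crossings S zs)) / 2"
proof -
  let ?C = "circ_splits n xs" and ?next = "\<lambda>k. (k+1) mod length zs"
  have "(\<Sum>k<length zs. circ_comb n xs lam (zs!k) (zs!?next k))
      = (\<Sum>S\<in>?C. \<Sum>k<length zs. lam S * split_pm S (zs!k) (zs!?next k))"
    unfolding circ_comb_def by (rule sum.swap)
  also have "\<dots> = (\<Sum>S\<in>?C. lam S * card (crossings S zs))"
    by (simp only: sum_distrib_left[symmetric] sum_split_pm_eq_card_crossings)
  finally show ?thesis
    unfolding balanced_length_def by simp
qed

lemma balanced_length_circ_comb_less:
  assumes "\<forall>S\<in>circ_splits n xs. lam S \<ge> 0"
    and "\<And>S. S \<in> circ_splits n xs \<Longrightarrow> card (crossings S zs) \<le> card (crossings S zs')"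
    and "S\<^sub>0 \<in> circ_splits n xs" "lam S\<^sub>0 > 0" "card (crossings S\<^sub>0 zs) < card (crossings S\<^sub>0 zs')"
  shows "balanced_length (circ_comb n xs lam) zs < balanced_length (circ_comb n xs lam) zs'"
proof -
  have "lam S * card (crossings S zs) \<le> lam S * card (crossings S zs')" if "S \<in> circ_splits n xs" for S
    using assms(1,2) that by (simp add: mult_left_mono)
  moreover have "lam S\<^sub>0 * card (crossings S\<^sub>0 zs) < lam S\<^sub>0 * card (crossings S\<^sub>0 zs')"
    using assms(4,5) by simp
  ultimately have "(\<Sum>S\<in>circ_splits n xs. lam S * card (crossings S zs))
      < (\<Sum>S\<in>circ_splits n xs. lam S * card (crossings S zs'))"
    using assms(3) by (intro sum_strict_mono_ex1[OF finite_circ_splits]) auto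
  then show ?thesis
    by (simp add: balanced_length_circ_comb)
qed

lemma mem_crossings_compl:
  assumes "set zs = X" "A \<subseteq> X"
  shows "k \<in> crossings {A, X - A} zs
    \<longleftrightarrow> k < length zs \<and> (zs!k \<in> A \<longleftrightarrow> zs!((k+1) mod length zs) \<notin> A)"
proof (cases "k < length zs")
  case True
  then have "(k+1) mod length zs < length zs"
    by (rule add_one_mod_less)
  then have "zs!k \<in> X" "zs!((k+1) mod length zs) \<in> X"
    using True assms(1) by auto
  then show ?thesis
    using assms(2) by (auto simp: crossings_def split_pm_def)
qed (simp add: crossings_def)

lemma card_crossings_rotate: "card (crossings S (rotate r zs)) = card (crossings S zs)"
proof -
  have le: "card (crossings S (rotate r zs)) \<le> card (crossings S zs)" for r zs
  proof (rule card_inj_on_le)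
    let ?L = "length zs"
    show "inj_on (\<lambda>k. (r + k) mod ?L) (crossings S (rotate r zs))"
      by (rule inj_onI) (auto simp: crossings_def intro: add_mod_cancel_left)
    show "(\<lambda>k. (r + k) mod ?L) ` crossings S (rotate r zs) \<subseteq> crossings S zs"
    proof
      fix j assume "j \<in> (\<lambda>k. (r + k) mod ?L) ` crossings S (rotate r zs)"
      then obtain k where k: "k \<in> crossings S (rotate r zs)" and j: "j = (r + k) mod ?L"
        by blast
      then have "k < ?L" by (simp add: crossings_def)
      then have "0 < ?L"
        by linarith
      then have "j < ?L" "(k+1) mod ?L < ?L"
        by (simp_all add: j)
      then have "rotate r zs ! k = zs ! j" "rotate r zs ! ((k+1) mod ?L) = zs ! ((j+1) mod ?L)"
        using \<open>k < ?L\<close> by (simp_all add: j nth_rotate mod_add_right_eq mod_Suc_eq)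
      then show "j \<in> crossings S zs"
        using k \<open>j < ?L\<close> by (simp add: crossings_def)
    qed
    show "finite (crossings S zs)" by (simp add: crossings_def)
  qed
  show ?thesis
    using le[of r zs] le[of "length zs - r mod length zs" "rotate r zs"]
    by (simp add: rotate_inverse)
qed

lemma ex_cyclic_step_leaving:
  assumes "a \<in> set zs" "a \<in> A" "\<not> set zs \<subseteq> A"
  shows "\<exists>k<length zs. zs!k \<in> A \<and> zs!((k+1) mod length zs) \<notin> A"
proof (rule ccontr)
  assume stay: "\<not> ?thesis"
  define L where "L = length zs"
  obtain k0 where k0: "k0 < L" "zs!k0 = a"
    using assms(1) unfolding L_def by (metis in_set_conv_nth)
  have all_in: "zs!((k0+t) mod L) \<in> A" for t
  proof (induction t)
    case 0
    then show ?case using k0 assms(2) by simp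
  next
    case (Suc t)
    have "(k0+t) mod L < L" using k0 by simp
    then have "zs!(((k0+t) mod L + 1) mod L) \<in> A"
      using stay Suc L_def by auto
    then show ?case by (simp add: mod_Suc_eq)
  qed
  have "set zs \<subseteq> A"
  proof
    fix x assume "x \<in> set zs"
    then obtain j where j: "j < L" "zs!j = x"
      unfolding L_def by (metis in_set_conv_nth)
    then have "(k0 + (L - k0 + j)) mod L = j"
      using k0 by simp
    then show "x \<in> A" using all_in[of "L - k0 + j"] j by simp
  qed
  then show False using assms(3) by contradiction
qed

lemma two_le_card_crossings:
  assumes "set zs = {1..n}" "is_split n S"
  shows "2 \<le> card (crossings S zs)"
proof -
  let ?X = "{1..n}"
  obtain A where A: "A \<noteq> {}" "A \<subset> ?X" "S = {A, ?X - A}"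
    using assms(2) unfolding is_split_def by blast
  obtain a b where "a \<in> A" "b \<in> ?X - A" using A(1,2) by blast
  obtain k1 where k1: "k1 < length zs" "zs!k1 \<in> A" "zs!((k1+1) mod length zs) \<notin> A"
    using ex_cyclic_step_leaving[of a zs A] \<open>a \<in> A\<close> A(2) assms(1) by blast
  obtain k2 where k2: "k2 < length zs" "zs!k2 \<in> ?X - A" "zs!((k2+1) mod length zs) \<notin> ?X - A"
    using ex_cyclic_step_leaving[of b zs "?X - A"] \<open>b \<in> ?X - A\<close> A(1,2) assms(1) by blast
  have AX: "A \<subseteq> ?X" using A(2) by blast
  have "zs!((k2+1) mod length zs) \<in> ?X"
    using add_one_mod_less[OF k2(1)] assms(1) by (metis nth_mem)
  then have "k1 \<in> crossings S zs" "k2 \<in> crossings S zs"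
    unfolding A(3) mem_crossings_compl[OF assms(1) AX] using k1 k2 by auto
  moreover have "k1 \<noteq> k2" using k1 k2 by auto
  ultimately show ?thesis
    using card_mono[of "crossings S zs" "{k1, k2}"] by (simp add: crossings_def)
qed

lemma three_le_card_crossings_pair:
  assumes "distinct ys" "set ys = X" "a \<in> X" "b \<in> X" "a \<noteq> b"
    and nonadj: "\<not> cyclic_adjacent ys a b"
  shows "3 \<le> card (crossings {{a, b}, X - {a, b}} ys)"
proof -
  let ?L = "length ys" and ?A = "{a, b}"
  let ?next = "\<lambda>k. (k + 1) mod ?L"
  have AX: "?A \<subseteq> X" using assms(3,4) by simp
  obtain p q where p: "p < ?L" "ys!p = a" and q: "q < ?L" "ys!q = b"
    using assms(2-4) by (metis in_set_conv_nth)
  have "p \<noteq> q" using p q assms(5) by blast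
  then have L2: "2 \<le> ?L" using p(1) q(1) by linarith
  have next_lt: "?next k < ?L" if "k < ?L" for k
    using that by (rule add_one_mod_less)
  have next_ne: "?next k \<noteq> k" if "k < ?L" for k
    using that L2 by (auto simp: mod_if)
  have nth_eq: "ys!j = ys!k \<longleftrightarrow> j = k" if "j < ?L" "k < ?L" for j k
    using assms(1) that by (simp add: nth_eq_iff_index_eq)
  define r where "r = (p + ?L - 1) mod ?L"
  have "0 < ?L" using L2 by linarith
  then have r: "r < ?L" "?next r = p"
    using p(1) by (simp_all add: r_def mod_Suc_eq)
  have "ys!(?next p) \<noteq> b" "ys!(?next q) \<noteq> a" "ys!r \<noteq> b"
    using nonadj cyclic_succI[OF p(1)] cyclic_succI[OF q(1)] cyclic_succI[OF r(1)] p q r(2)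
    by auto
  moreover have "ys!(?next p) \<noteq> a" "ys!(?next q) \<noteq> b" "ys!r \<noteq> a"
    using nth_eq next_lt next_ne p q r by (metis, metis, metis)
  ultimately have "p \<in> crossings {?A, X - ?A} ys" "q \<in> crossings {?A, X - ?A} ys"
      "r \<in> crossings {?A, X - ?A} ys"
    unfolding mem_crossings_compl[OF assms(2) AX] using p q r by auto
  moreover have "r \<noteq> p" "r \<noteq> q"
    using \<open>ys!r \<noteq> a\<close> \<open>ys!r \<noteq> b\<close> p q by auto
  then have "card {p, q, r} = 3"
    using \<open>p \<noteq> q\<close> by simp
  ultimately show ?thesis
    using card_mono[of "crossings {?A, X - ?A} ys" "{p, q, r}"] by (simp add: crossings_def)
qed

section \<open>Arcs and circular splits\<close>

lemma nth_in_set_take_iff: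
  assumes "distinct zs" "j < length zs"
  shows "zs!j \<in> set (take m zs) \<longleftrightarrow> j < m"
proof
  assume "zs!j \<in> set (take m zs)"
  show "j < m"
  proof (rule ccontr)
    assume "\<not> j < m"
    then have "zs!j = drop m zs ! (j - m)" "j - m < length (drop m zs)"
      using assms(2) by simp_all
    then have "zs!j \<in> set (drop m zs)"
      by (metis nth_mem)
    then show False
      using \<open>zs!j \<in> set (take m zs)\<close> set_take_disj_set_drop_if_distinct[OF assms(1), of m m]
      by blast
  qed
next
  assume "j < m"
  then have "take m zs ! j = zs!j" "j < length (take m zs)"
    using assms(2) by simp_all
  then show "zs!j \<in> set (take m zs)"
    by (metis nth_mem)
qed

lemma card_crossings_prefix_split_le:
  assumes "distinct zs" "set zs = X"
  shows "card (crossings {set (take m zs), X - set (take m zs)} zs) \<le> 2"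
proof -
  let ?A = "set (take m zs)" and ?L = "length zs"
  have AX: "?A \<subseteq> X"
    unfolding assms(2)[symmetric] by (rule set_take_subset)
  have "crossings {?A, X - ?A} zs \<subseteq> {m - 1, ?L - 1}"
  proof
    fix k assume k: "k \<in> crossings {?A, X - ?A} zs"
    show "k \<in> {m - 1, ?L - 1}"
    proof (rule ccontr)
      assume k_notin: "k \<notin> {m - 1, ?L - 1}"
      from k have "k < ?L" and cross: "zs!k \<in> ?A \<longleftrightarrow> zs!((k+1) mod ?L) \<notin> ?A"
        unfolding mem_crossings_compl[OF assms(2) AX] by simp_all
      then have "k + 1 < ?L"
        using k_notin by auto
      then have "k < m \<longleftrightarrow> \<not> k + 1 < m"
        using cross \<open>k < ?L\<close> nth_in_set_take_iff[OF assms(1)] by simp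
      then show False
        using k_notin by (cases "k < m") auto
    qed
  qed
  then have "card (crossings {?A, X - ?A} zs) \<le> card {m - 1, ?L - 1}"
    by (rule card_mono[rotated]) simp
  also have "\<dots> \<le> 2"
    by (simp add: card_insert_le_m1)
  finally show ?thesis .
qed

lemma arc_eq_set_take_rotate:
  assumes "xs \<noteq> []"
  shows "arc xs i m = set (take m (rotate i xs))"
proof -
  let ?L = "length xs" and ?zs = "rotate i xs"
  have L0: "0 < ?L" using assms by simp
  have rot: "?zs ! (k mod ?L) = xs ! ((i + k) mod ?L)" for k
    using L0 by (simp add: nth_rotate mod_add_right_eq)
  show ?thesis
  proof
    show "arc xs i m \<subseteq> set (take m ?zs)"
    proof
      fix y assume "y \<in> arc xs i m"
      then obtain k where "k < m" "y = xs ! ((i + k) mod ?L)"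
        unfolding arc_def by blast
      moreover have "k mod ?L < m" "k mod ?L < ?L"
        using \<open>k < m\<close> L0 by (simp_all add: le_less_trans[OF mod_less_eq_dividend])
      ultimately show "y \<in> set (take m ?zs)"
        using rot by (metis in_set_conv_nth length_rotate length_take min_less_iff_conj nth_take)
    qed
  next
    show "set (take m ?zs) \<subseteq> arc xs i m"
    proof
      fix y assume "y \<in> set (take m ?zs)"
      then obtain j where "j < m" "j < ?L" "y = ?zs ! j"
        by (auto simp: in_set_conv_nth)
      then show "y \<in> arc xs i m"
        unfolding arc_def using rot[of j] by auto
    qed
  qed
qed

lemma arc_complement:
  assumes "distinct xs" "m \<le> length xs"
  shows "arc xs (i + m) (length xs - m) = set xs - arc xs i m"
proof (cases "m = length xs")
  case True
  show ?thesis
  proof (cases "xs = []")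
    case False
    then show ?thesis
      using True by (simp add: arc_eq_set_take_rotate)
  qed (simp add: arc_def)
next
  case False
  let ?zs = "rotate i xs"
  have "m < length ?zs" "xs \<noteq> []" using False assms(2) by auto
  have "rotate (i + m) xs = rotate m ?zs"
    by (simp add: rotate_rotate add.commute)
  also have "\<dots> = drop m ?zs @ take m ?zs"
    using rotate_drop_take[of m ?zs] \<open>m < length ?zs\<close> by simp
  finally have "rotate (i + m) xs = drop m ?zs @ take m ?zs" .
  then have "arc xs (i + m) (length xs - m) = set (drop m ?zs)"
    using \<open>xs \<noteq> []\<close> by (simp add: arc_eq_set_take_rotate)
  also have "\<dots> = set ?zs - set (take m ?zs)"
    using set_take_disj_set_drop_if_distinct[of ?zs m m] assms(1)
      set_append[of "take m ?zs" "drop m ?zs"]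
    by auto
  finally show ?thesis
    using \<open>xs \<noteq> []\<close> by (simp add: arc_eq_set_take_rotate)
qed

lemma arc_two:
  assumes "i + 1 < length xs"
  shows "arc xs i 2 = {xs!i, xs!(i+1)}"
proof -
  have "{k::nat. k < 2} = {0, 1}"
    by auto
  moreover have "arc xs i 2 = (\<lambda>k. xs ! ((i + k) mod length xs)) ` {k. k < 2}"
    unfolding arc_def by auto
  ultimately show ?thesis
    using assms by simp
qed

lemma is_split_eq_compl:
  assumes "is_split n S" "B \<in> S"
  shows "S = {B, {1..n} - B}"
proof -
  obtain A where A: "A \<subset> {1..n}" "S = {A, {1..n} - A}"
    using assms(1) unfolding is_split_def by blast
  then have "{1..n} - ({1..n} - A) = A" by blast
  then show ?thesis
    using A assms(2) by auto
qed

lemma arc_split_in_circ_splits: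
  assumes "distinct xs" "set xs = {1..n}" "0 < m" "m < length xs"
  shows "{arc xs i m, {1..n} - arc xs i m} \<in> circ_splits n xs"
proof -
  let ?zs = "rotate i xs"
  have arc: "arc xs i m = set (take m ?zs)"
    using assms(4) by (intro arc_eq_set_take_rotate) auto
  have "xs \<noteq> []"
    using assms(4) by (cases xs) auto
  moreover have zs: "distinct ?zs" "set ?zs = {1..n}" "m < length ?zs"
    using assms(1,2,4) by simp_all
  ultimately have "?zs!0 \<in> arc xs i m" "?zs!m \<notin> arc xs i m"
    unfolding arc using nth_in_set_take_iff[of ?zs 0 m] nth_in_set_take_iff[of ?zs m m] assms(3)
    by simp_all
  moreover have "arc xs i m \<subseteq> {1..n}" "?zs!m \<in> {1..n}"
    unfolding arc using set_take_subset[of m ?zs] nth_mem[OF zs(3)] zs(2) by simp_all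
  ultimately have "is_split n {arc xs i m, {1..n} - arc xs i m}"
    unfolding is_split_def by blast
  moreover have "{1..n} - arc xs i m = arc xs (i + m) (length xs - m)"
    using arc_complement[OF assms(1)] assms(2,4) by simp
  ultimately show ?thesis
    unfolding circ_splits_def by blast
qed

lemma card_crossings_circ_split_le:
  assumes "distinct xs" "set xs = {1..n}" "S \<in> circ_splits n xs"
  shows "card (crossings S xs) \<le> 2"
proof -
  obtain i j m l where split: "is_split n S" and S: "S = {arc xs i m, arc xs j l}"
    using assms(3) unfolding circ_splits_def by blast
  then have S_compl: "S = {arc xs i m, {1..n} - arc xs i m}"
    using is_split_eq_compl[OF split, of "arc xs i m"] by simp
  obtain A where "A \<noteq> {}" "A \<subseteq> {1..n}"
    using split unfolding is_split_def by blast
  then have "xs \<noteq> []"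
    using assms(2) by auto
  then have "S = {set (take m (rotate i xs)), {1..n} - set (take m (rotate i xs))}"
    using S_compl by (simp add: arc_eq_set_take_rotate)
  then have "card (crossings S (rotate i xs)) \<le> 2"
    using card_crossings_prefix_split_le[of "rotate i xs"] assms(1,2) by simp
  then show ?thesis
    by (simp add: card_crossings_rotate)
qed

lemma neighbour_split_in_circ_splits:
  assumes "distinct xs" "set xs = {1..n}" "i + 1 < length xs" "2 < length xs"
  shows "{{xs!i, xs!(i+1)}, {1..n} - {xs!i, xs!(i+1)}} \<in> circ_splits n xs"
  using arc_split_in_circ_splits[OF assms(1,2), of 2 i] arc_two[OF assms(3)] assms(4) by simp

lemma card_crossings_circ_split_mono:
  assumes "distinct xs" "set xs = {1..n}" "set ys = {1..n}" "S \<in> circ_splits n xs"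
  shows "card (crossings S xs) \<le> card (crossings S ys)"
  using card_crossings_circ_split_le[OF assms(1,2,4)] two_le_card_crossings[OF assms(3)] assms(4)
  unfolding circ_splits_def by fastforce

theorem mainTheorem13:
  fixes n :: nat and xs ys :: "nat list" and lam :: "nat set set \<Rightarrow> real"
  assumes "circ_ordering n xs" and "circ_ordering n ys"
    and "\<forall>S\<in>circ_splits n xs. lam S \<ge> 0"
    and "\<forall>S\<in>circ_splits n xs. (\<forall>B\<in>S. card B \<ge> 2) \<longrightarrow> lam S > 0"
    and "\<not> same_circ ys xs"
  shows "balanced_length (circ_comb n xs lam) ys > balanced_length (circ_comb n xs lam) xs"
proof -
  let ?X = "{1..n}" and ?C = "circ_splits n xs"
  have dx: "distinct xs" and sx: "set xs = ?X" and dy: "distinct ys" and sy: "set ys = ?X"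
    using assms(1,2) unfolding circ_ordering_def by auto
  then have len: "length xs = n" "length ys = n"
    by (metis card_atLeastAtMost diff_Suc_1 distinct_card)+
  obtain i where i: "i + 1 < length xs" and nonadj: "\<not> cyclic_adjacent ys (xs!i) (xs!(i+1))"
    using same_circ_if_consecutive_adjacent[OF dx dy] sx sy assms(5) by auto
  let ?A = "{xs!i, xs!(i+1)}"
  let ?S = "{?A, ?X - ?A}"
  have pair: "xs!i \<in> ?X" "xs!(i+1) \<in> ?X" "xs!i \<noteq> xs!(i+1)"
    using i dx sx nth_mem[of i xs] nth_mem[of "i+1" xs] by (auto simp: nth_eq_iff_index_eq)
  have "4 \<le> n"
    using cyclic_adjacent_if_length_le_3[OF dy] pair nonadj sy len by fastforce
  then have S: "?S \<in> ?C"
    using neighbour_split_in_circ_splits[OF dx sx i] len by simp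
  moreover have "card ?A = 2" "card (?X - ?A) = n - 2"
    using pair by (simp_all add: card_Diff_subset)
  ultimately have "lam ?S > 0"
    using assms(4) \<open>4 \<le> n\<close> by auto
  moreover have "card (crossings ?S xs) < card (crossings ?S ys)"
    using card_crossings_circ_split_le[OF dx sx S] three_le_card_crossings_pair[OF dy sy pair nonadj]
    by linarith
  ultimately show ?thesis
    using balanced_length_circ_comb_less[OF assms(3) card_crossings_circ_split_mono[OF dx sx sy] S]
    by simp
qed

end
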